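(* For $a\in\mathbb{Q}$ let $\mathcal{R}_a$ be the rectangle with vertices $P_1=(0,0)$, $P_2=(0,1)$, $P_3=(a,0)$, $P_4=(a,1)$. Then the set of $a\in\mathbb{Q}$ for which there are infinitely many points $(x,y)\in\mathbb{Q}^2$ whose Euclidean distances to each of $P_1,P_2,P_3,P_4$ are rational numbers is dense in $\mathbb{R}$.
   Context: No further context is needed. *)

theory Defs
  imports "HOL-Analysis.Analysis"
begin

definition eucl_dist :: "real \<times> real \<Rightarrow> real \<times> real \<Rightarrow> real" where
  "eucl_dist p q = sqrt ((fst p - fst q)^2 + (snd p - snd q)^2)"

definition rect_vertices :: "real \<Rightarrow> (real \<times> real) set" where
  "rect_vertices a = {(0,0), (0,1), (a,0), (a,1)}"

definition good_points :: "real \<Rightarrow> (real \<times> real) set" where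
  "good_points a = {(x,y). x \<in> \<rat> \<and> y \<in> \<rat> \<and>
      (\<forall>P \<in> rect_vertices a. eucl_dist (x,y) P \<in> \<rat>)}"

definition good_params :: "real set" where
  "good_params = {a \<in> \<rat>. infinite (good_points a)}"

end

theory Submission
  imports Defs
begin

text \<open>The rectangle \<open>R\<^sub>a\<close> is inscribed in the circle of centre \<open>(a/2, 1/2)\<close> and radius
  \<open>\<rho> = \<surd>(a\<^sup>2 + 1)/2\<close>. Parametrising this circle by doubling the angle of a unit vector \<open>p\<close>,
  the chord between the points of \<open>p\<close> and \<open>q\<close> has length \<open>2\<rho>|p \<times> q|\<close>. Hence if \<open>\<rho>\<close> is rational
  and the vertices come from rational unit vectors, each of the infinitely many rational unit
  vectors \<open>((1 - t\<^sup>2)/(1 + t\<^sup>2), 2t/(1 + t\<^sup>2))\<close> yields a rational point at rational distance from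
  all four vertices. With \<open>F k = (k\<^sup>2 - 1)/(2k)\<close>, the number \<open>F(k)\<^sup>2 + 1\<close> is a rational square for
  rational \<open>k\<close>, and both conditions hold for \<open>a = F(F k)\<close>. Finally \<open>F \<circ> F\<close> maps \<open>(1, \<infinity>)\<close>
  continuously onto \<open>\<real>\<close>, so its values at rational points are dense.\<close>

definition pyth_ratio :: "real \<Rightarrow> real" where
  "pyth_ratio k = (k^2 - 1) / (2*k)"

lemma pyth_ratio_hypot:
  assumes "k \<noteq> 0"
  shows "(pyth_ratio k)^2 + 1 = ((k^2 + 1) / (2*k))^2"
  using assms unfolding pyth_ratio_def by (simp add: field_simps power2_eq_square)

lemma pyth_ratio_pos: "k > 1 \<Longrightarrow> pyth_ratio k > 0"
  unfolding pyth_ratio_def by (simp add: one_less_power)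

lemma pyth_ratio_Rats: "k \<in> \<rat> \<Longrightarrow> pyth_ratio k \<in> \<rat>"
  unfolding pyth_ratio_def by simp

lemma continuous_on_pyth_ratio: "0 \<notin> S \<Longrightarrow> continuous_on S pyth_ratio"
  unfolding pyth_ratio_def by (intro continuous_intros) auto

lemma pyth_ratio_inverse:
  fixes x :: real
  defines "k \<equiv> x + sqrt (x^2 + 1)"
  shows "k > 0" and "x > 0 \<Longrightarrow> k > 1" and "pyth_ratio k = x"
proof -
  have sq: "(sqrt (x^2 + 1))^2 = x^2 + 1" by simp
  have "\<bar>x\<bar> < sqrt (x^2 + 1)"
    using real_sqrt_less_mono[of "x^2" "x^2 + 1"] by simp
  then show k0: "k > 0" unfolding k_def by linarith
  have "1 \<le> sqrt (x^2 + 1)" by simp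
  then show "x > 0 \<Longrightarrow> k > 1" unfolding k_def by linarith
  have "k^2 - 1 = 2 * x * k" unfolding k_def using sq by (simp add: power2_eq_square algebra_simps)
  then show "pyth_ratio k = x" unfolding pyth_ratio_def using k0 by (simp add: field_simps)
qed

lemma pyth_ratio_image_gt_1: "pyth_ratio ` {1<..} = {0<..}"
proof
  show "pyth_ratio ` {1<..} \<subseteq> {0<..}" using pyth_ratio_pos by auto
  show "{0<..} \<subseteq> pyth_ratio ` {1<..}"
  proof
    fix x :: real assume "x \<in> {0<..}"
    then show "x \<in> pyth_ratio ` {1<..}"
      using pyth_ratio_inverse(2,3)[of x] by (metis greaterThan_iff rev_image_eqI)
  qed
qed

lemma pyth_ratio_image_pos: "pyth_ratio ` {0<..} = UNIV"
proof -
  have "x \<in> pyth_ratio ` {0<..}" for x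
    using pyth_ratio_inverse(1,3)[of x] by (metis greaterThan_iff rev_image_eqI)
  then show ?thesis by blast
qed

definition rat_circle :: "(real \<times> real) set" where
  "rat_circle = {p. fst p \<in> \<rat> \<and> snd p \<in> \<rat> \<and> (fst p)^2 + (snd p)^2 = 1}"

definition stereo :: "real \<Rightarrow> real \<times> real" where
  "stereo t = ((1 - t^2) / (1 + t^2), 2 * t / (1 + t^2))"

lemma one_plus_square_pos: "1 + (t::real)^2 > 0"
  by (simp add: add_pos_nonneg)

lemma stereo_in_rat_circle: "t \<in> \<rat> \<Longrightarrow> stereo t \<in> rat_circle"
proof -
  assume "t \<in> \<rat>"
  moreover have "(1 - t^2)^2 + (2*t)^2 = (1 + t^2)^2" by (simp add: power2_eq_square algebra_simps)
  ultimately show ?thesis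
    using one_plus_square_pos[of t]
    unfolding rat_circle_def stereo_def by (simp add: power_divide add_divide_distrib[symmetric])
qed

lemma stereo_cross:
  "fst (stereo t) * snd (stereo u) - snd (stereo t) * fst (stereo u)
     = 2 * (u - t) * (1 + t * u) / ((1 + t^2) * (1 + u^2))"
  using one_plus_square_pos[of t] one_plus_square_pos[of u]
  unfolding stereo_def by (simp add: divide_simps) algebra

text \<open>The point of the circle with centre \<open>c\<close> and radius \<open>R\<close> at twice the angle of the unit
  vector \<open>p\<close>; angle doubling makes chord lengths polynomial in the unit vectors.\<close>

definition circle_point :: "real \<times> real \<Rightarrow> real \<Rightarrow> real \<times> real \<Rightarrow> real \<times> real" where
  "circle_point c R p = (fst c + R * ((fst p)^2 - (snd p)^2), snd c + 2 * R * fst p * snd p)"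

lemma eucl_dist_circle_point:
  assumes "(fst p)^2 + (snd p)^2 = 1" "(fst q)^2 + (snd q)^2 = 1"
  shows "eucl_dist (circle_point c R p) (circle_point c R q) = \<bar>2 * R * (fst p * snd q - snd p * fst q)\<bar>"
proof -
  obtain p1 p2 q1 q2 where p: "p = (p1, p2)" and q: "q = (q1, q2)" by fastforce
  have "(R * (p1^2 - p2^2) - R * (q1^2 - q2^2))^2 + (2*R*p1*p2 - 2*R*q1*q2)^2
        = R^2 * (((p1 - q1)^2 + (p2 - q2)^2) * ((p1 + q1)^2 + (p2 + q2)^2))"
    by (simp add: power2_eq_square algebra_simps)
  also have "((p1 - q1)^2 + (p2 - q2)^2) * ((p1 + q1)^2 + (p2 + q2)^2) = 4 * (p1*q2 - p2*q1)^2"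
    using assms unfolding p q by simp algebra
  finally have "(R * (p1^2 - p2^2) - R * (q1^2 - q2^2))^2 + (2*R*p1*p2 - 2*R*q1*q2)^2
        = (2 * R * (p1*q2 - p2*q1))^2"
    by (simp add: power2_eq_square algebra_simps)
  then show ?thesis unfolding eucl_dist_def circle_point_def p q by simp
qed

text \<open>For \<open>m\<^sup>2 + 1 = s\<^sup>2\<close> one has \<open>pyth_ratio m\<^sup>2 + 1 = (s\<^sup>2/(2m))\<^sup>2\<close>, so the circumradius is \<open>s\<^sup>2/(4m)\<close>.\<close>

lemma rect_vertices_circle:
  assumes "m > 0" "s > 0" "m^2 + 1 = s^2"
  shows "rect_vertices (pyth_ratio m) = circle_point (pyth_ratio m / 2, 1/2) (s^2 / (4*m)) `
           {(1/s, -m/s), (1/s, m/s), (m/s, -1/s), (m/s, 1/s)}"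
proof -
  have "(0, 0) = circle_point (pyth_ratio m / 2, 1/2) (s^2 / (4*m)) (1/s, -m/s)"
       "(0, 1) = circle_point (pyth_ratio m / 2, 1/2) (s^2 / (4*m)) (1/s, m/s)"
       "(pyth_ratio m, 0) = circle_point (pyth_ratio m / 2, 1/2) (s^2 / (4*m)) (m/s, -1/s)"
       "(pyth_ratio m, 1) = circle_point (pyth_ratio m / 2, 1/2) (s^2 / (4*m)) (m/s, 1/s)"
    using assms unfolding circle_point_def pyth_ratio_def
    by (simp_all add: field_simps power2_eq_square; algebra)+
  then show ?thesis unfolding rect_vertices_def by simp
qed

lemma circle_point_in_good_points:
  assumes c: "fst c \<in> \<rat>" "snd c \<in> \<rat>" and R: "R \<in> \<rat>"
    and V: "V \<subseteq> rat_circle" and vertices: "rect_vertices a = circle_point c R ` V"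
    and p: "p \<in> rat_circle"
  shows "circle_point c R p \<in> good_points a"
proof -
  have "eucl_dist (circle_point c R p) (circle_point c R v) \<in> \<rat>" if "v \<in> V" for v
    using p V that R by (auto simp: eucl_dist_circle_point rat_circle_def)
  moreover have "fst (circle_point c R p) \<in> \<rat>" "snd (circle_point c R p) \<in> \<rat>"
    using c R p by (auto simp: circle_point_def rat_circle_def)
  ultimately show ?thesis
    unfolding good_points_def vertices by (cases "circle_point c R p") auto
qed

lemma infinite_good_points_circle:
  assumes c: "fst c \<in> \<rat>" "snd c \<in> \<rat>" and R: "R \<in> \<rat>" "R \<noteq> 0"
    and V: "V \<subseteq> rat_circle" and vertices: "rect_vertices a = circle_point c R ` V"
  shows "infinite (good_points a)"
proof -
  define X where "X n = circle_point c R (stereo (real n))" for n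
  have "inj X"
  proof (rule injI)
    fix n n' assume "X n = X n'"
    then have "eucl_dist (X n) (X n') = 0" by (simp add: eucl_dist_def)
    moreover have "1 + real n * real n' > 0" by (simp add: add_pos_nonneg)
    ultimately show "n = n'"
      using stereo_in_rat_circle[of "real n"] stereo_in_rat_circle[of "real n'"] R
        one_plus_square_pos[of "real n"] one_plus_square_pos[of "real n'"]
      by (simp add: X_def eucl_dist_circle_point rat_circle_def stereo_cross)
  qed
  moreover have "range X \<subseteq> good_points a"
    using circle_point_in_good_points[OF c R(1) V vertices] stereo_in_rat_circle Rats_of_nat
    unfolding X_def by blast
  ultimately show ?thesis
    using finite_subset finite_imageD by blast
qed

lemma pyth_ratio_pyth_ratio_good:
  assumes "k \<in> \<rat>" "k > 1"
  shows "pyth_ratio (pyth_ratio k) \<in> good_params"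
proof -
  define m where "m = pyth_ratio k"
  define s where "s = (k^2 + 1) / (2*k)"
  have m: "m > 0" "m \<in> \<rat>" using assms pyth_ratio_pos pyth_ratio_Rats by (auto simp: m_def)
  have s: "s > 0" "s \<in> \<rat>" using assms by (auto simp: s_def add_pos_nonneg)
  have ms: "m^2 + 1 = s^2" using assms pyth_ratio_hypot by (simp add: m_def s_def)
  have "{(1/s, -m/s), (1/s, m/s), (m/s, -1/s), (m/s, 1/s)} \<subseteq> rat_circle"
    using m s ms by (auto simp: rat_circle_def power_divide add_divide_distrib[symmetric] add.commute)
  from infinite_good_points_circle[OF _ _ _ _ this rect_vertices_circle[OF m(1) s(1) ms]]
  have "infinite (good_points (pyth_ratio m))" using m s by (simp add: pyth_ratio_Rats)
  then show ?thesis using m by (simp add: good_params_def m_def pyth_ratio_Rats)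
qed

lemma isCont_in_closure_image:
  fixes f :: "'a::metric_space \<Rightarrow> 'b::metric_space"
  assumes "isCont f x" "x \<in> closure A"
  shows "f x \<in> closure (f ` A)"
proof -
  obtain X where X: "\<forall>n. X n \<in> A" "X \<longlonglongrightarrow> x"
    using assms(2) unfolding closure_sequential by blast
  have "(\<lambda>n. f (X n)) \<longlonglongrightarrow> f x" using isCont_tendsto_compose[OF assms(1) X(2)] .
  moreover have "\<forall>n. f (X n) \<in> f ` A" using X(1) by blast
  ultimately show ?thesis unfolding closure_sequential by (intro exI[of _ "\<lambda>n. f (X n)"]) simp
qed

lemma image_subset_closure_image_Rats:
  fixes f :: "real \<Rightarrow> 'a::metric_space"
  assumes "open S" "continuous_on S f"
  shows "f ` S \<subseteq> closure (f ` (S \<inter> \<rat>))"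
proof
  fix y assume "y \<in> f ` S"
  then obtain x where x: "x \<in> S" "y = f x" by blast
  have "x \<in> closure (S \<inter> \<rat>)"
    using open_Int_closure_subset[OF assms(1), of \<rat>] x(1) by (auto simp: Rats_closure_real)
  moreover have "isCont f x" using assms x(1) continuous_on_eq_continuous_at by blast
  ultimately show "y \<in> closure (f ` (S \<inter> \<rat>))"
    using x(2) isCont_in_closure_image by blast
qed

theorem theorem2p1:
  shows "closure good_params = UNIV"
proof -
  let ?f = "pyth_ratio \<circ> pyth_ratio"
  have "?f ` {1<..} = UNIV"
    by (simp only: image_comp[symmetric] pyth_ratio_image_gt_1 pyth_ratio_image_pos)
  moreover have "continuous_on {1<..} ?f"
    using continuous_on_pyth_ratio pyth_ratio_image_gt_1
    by (intro continuous_on_compose) auto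
  ultimately have "UNIV \<subseteq> closure (?f ` ({1<..} \<inter> \<rat>))"
    using image_subset_closure_image_Rats[of "{1<..}" ?f] by simp
  also have "\<dots> \<subseteq> closure good_params"
    using pyth_ratio_pyth_ratio_good by (intro closure_mono) auto
  finally show ?thesis by blast
qed

end
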